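(* Every tree is complement critical. Every tree which is not a star is vector critical.
   Context: All graphs are finite and simple with nonempty vertex set; $\overline{G}$ denotes the complement of $G$. A star is a graph $K_{1,m}$. An orthogonal vector representation of a graph $G=(V,E)$ in $\mathbb{R}^d$ is a map $\phi:V\to\mathbb{R}^d$ with $\phi(v)\neq 0$ for all $v$, and for distinct $u,v$: $\langle\phi(u),\phi(v)\rangle=0$ if and only if $uv\notin E$. ${\rm mvr}(G)$ is the smallest $d$ for which such a representation exists. $G$ is vector critical if ${\rm mvr}(H)<{\rm mvr}(G)$ for every proper induced subgraph $H$ of $G$ (with nonempty vertex set). $G$ is complement critical if ${\rm mvr}(H)+{\rm mvr}(\overline{H})<{\rm mvr}(G)+{\rm mvr}(\overline{G})$ for every proper induced subgraph $H$ of $G$ (with nonempty vertex set). *)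

theory Defs
  imports Complex_Main
begin

definition graph :: "'a set \<Rightarrow> 'a set set \<Rightarrow> bool" where
  "graph V E \<longleftrightarrow> finite V \<and> V \<noteq> {} \<and>
     E \<subseteq> {{u, v} | u v. u \<in> V \<and> v \<in> V \<and> u \<noteq> v}"

definition complement_edges :: "'a set \<Rightarrow> 'a set set \<Rightarrow> 'a set set" where
  "complement_edges V E = {{u, v} | u v. u \<in> V \<and> v \<in> V \<and> u \<noteq> v \<and> {u, v} \<notin> E}"

definition induced_edges :: "'a set set \<Rightarrow> 'a set \<Rightarrow> 'a set set" where
  "induced_edges E S = {e \<in> E. e \<subseteq> S}"

text \<open>Vectors of R^d are represented as functions nat => real, only coordinates i < d matter.\<close>
definition orth_rep :: "'a set \<Rightarrow> 'a set set \<Rightarrow> nat \<Rightarrow> ('a \<Rightarrow> nat \<Rightarrow> real) \<Rightarrow> bool" where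
  "orth_rep V E d \<phi> \<longleftrightarrow>
     (\<forall>v\<in>V. \<exists>i<d. \<phi> v i \<noteq> 0) \<and>
     (\<forall>u\<in>V. \<forall>v\<in>V. u \<noteq> v \<longrightarrow>
        ((\<Sum>i<d. \<phi> u i * \<phi> v i) = 0 \<longleftrightarrow> {u, v} \<notin> E))"

definition mvr :: "'a set \<Rightarrow> 'a set set \<Rightarrow> nat" where
  "mvr V E = (LEAST d. \<exists>\<phi>. orth_rep V E d \<phi>)"

definition vector_critical :: "'a set \<Rightarrow> 'a set set \<Rightarrow> bool" where
  "vector_critical V E \<longleftrightarrow>
     (\<forall>S. S \<subset> V \<and> S \<noteq> {} \<longrightarrow> mvr S (induced_edges E S) < mvr V E)"

definition complement_critical :: "'a set \<Rightarrow> 'a set set \<Rightarrow> bool" where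
  "complement_critical V E \<longleftrightarrow>
     (\<forall>S. S \<subset> V \<and> S \<noteq> {} \<longrightarrow>
        mvr S (induced_edges E S) + mvr S (complement_edges S (induced_edges E S))
          < mvr V E + mvr V (complement_edges V E))"

definition walk :: "'a set \<Rightarrow> 'a set set \<Rightarrow> 'a list \<Rightarrow> bool" where
  "walk V E p \<longleftrightarrow> p \<noteq> [] \<and> set p \<subseteq> V \<and>
     (\<forall>i. Suc i < length p \<longrightarrow> {p ! i, p ! Suc i} \<in> E)"

definition connected_graph :: "'a set \<Rightarrow> 'a set set \<Rightarrow> bool" where
  "connected_graph V E \<longleftrightarrow>
     (\<forall>u\<in>V. \<forall>v\<in>V. \<exists>p. walk V E p \<and> hd p = u \<and> last p = v)"

definition is_cycle :: "'a set \<Rightarrow> 'a set set \<Rightarrow> 'a list \<Rightarrow> bool" where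
  "is_cycle V E c \<longleftrightarrow> length c \<ge> 3 \<and> distinct c \<and> walk V E c \<and> {last c, hd c} \<in> E"

definition is_tree :: "'a set \<Rightarrow> 'a set set \<Rightarrow> bool" where
  "is_tree V E \<longleftrightarrow> graph V E \<and> connected_graph V E \<and> \<not> (\<exists>c. is_cycle V E c)"

definition is_star :: "'a set \<Rightarrow> 'a set set \<Rightarrow> bool" where
  "is_star V E \<longleftrightarrow> graph V E \<and> (\<exists>c\<in>V. E = {{c, v} | v. v \<in> V \<and> v \<noteq> c})"

end

theory Submission
  imports Defs "HOL-Library.Function_Algebras" "HOL-Library.Indicator_Function"
begin

text \<open>
  Let \<open>\<phi>\<close> be an orthogonal representation of a tree \<open>T\<close> with \<open>n\<close> vertices. A vanishing
  combination \<open>\<Sum> c\<^sub>v \<phi>(v)\<close> with some \<open>c\<^sub>z = 0\<close> is trivial: otherwise connectivity gives an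
  edge \<open>zp\<close> with \<open>c\<^sub>z = 0 \<noteq> c\<^sub>p\<close>; cutting \<open>T\<close> at \<open>z\<close> splits the remaining vertices into the
  branch \<open>C\<close> of \<open>p\<close> and the rest \<open>R\<close>, which are mutually orthogonal, so the partial sums over
  \<open>C\<close> and \<open>R\<close> are opposite and orthogonal, hence zero; pairing the sum over \<open>C\<close> with \<open>\<phi>(z)\<close>
  leaves \<open>c\<^sub>p \<langle>\<phi>(z), \<phi>(p)\<rangle> \<noteq> 0\<close>. So any \<open>n - 1\<close> of the vectors are independent and
  \<open>mvr(T) \<ge> n - 1 \<ge> |E|\<close>.

  Conversely, a graph has a representation with one coordinate per edge and per isolated vertex.
  Deleting a vertex \<open>v\<close> from \<open>T\<close> removes \<open>deg v\<close> edges and creates at most \<open>deg v\<close> isolated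
  vertices, all of them neighbours of \<open>v\<close>; equality forces \<open>T\<close> to be a star centred at \<open>v\<close>.
  Hence a proper induced subgraph avoiding \<open>v\<close> has \<open>mvr < |E| \<le> mvr(T)\<close> unless \<open>T\<close> is a star
  centred at \<open>v\<close>. In that case the subgraph is edgeless, so its mvr is at most its size
  \<open>\<le> n - 1\<close> and its complement, being complete, has mvr \<open>1\<close>, whereas the complement of \<open>T\<close>
  has a non-edge and therefore mvr at least \<open>2\<close>.
\<close>

section \<open>Linear independence in function spaces\<close>

text \<open>HOL has no real vector space instance for function types, so scalar multiplication on
  \<open>'b \<Rightarrow> real\<close> is supplied explicitly to the \<open>vector_space\<close> locale.\<close>

definition fscale :: "real \<Rightarrow> ('b \<Rightarrow> real) \<Rightarrow> ('b \<Rightarrow> real)" where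
  "fscale a f = (\<lambda>x. a * f x)"

interpretation fvs: vector_space fscale
  by unfold_locales (auto simp: fscale_def fun_eq_iff algebra_simps)

lemma sum_apply: "(\<Sum>i\<in>I. (f i :: 'b \<Rightarrow> real)) x = (\<Sum>i\<in>I. f i x)"
  by (induction I rule: infinite_finite_induct) auto

lemma card_le_card_if_independent_in_span:
  fixes w :: "'i \<Rightarrow> ('b \<Rightarrow> real)"
  assumes fin: "finite I" "finite B"
    and span: "\<And>i. i \<in> I \<Longrightarrow> w i \<in> fvs.span B"
    and indep: "\<And>c. (\<Sum>i\<in>I. fscale (c i) (w i)) = 0 \<Longrightarrow> \<forall>i\<in>I. c i = 0"
  shows "card I \<le> card B"
proof -
  have inj: "inj_on w I"
  proof (rule inj_onI, rule ccontr)
    fix i j assume ij: "i \<in> I" "j \<in> I" "w i = w j" "i \<noteq> j"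
    define c where "c = (\<lambda>k. if k = i then (1::real) else if k = j then -1 else 0)"
    have "(\<Sum>k\<in>I. fscale (c k) (w k)) = (\<Sum>k\<in>{i,j}. fscale (c k) (w k))"
      by (rule sum.mono_neutral_right) (use ij fin in \<open>auto simp: c_def fscale_def fun_eq_iff\<close>)
    also have "\<dots> = 0" using ij by (auto simp: c_def fscale_def fun_eq_iff)
    finally have "\<forall>k\<in>I. c k = 0" by (rule indep)
    with ij show False by (auto simp: c_def)
  qed
  have "fvs.independent (w ` I)"
  proof (rule fvs.independent_if_scalars_zero)
    show "finite (w ` I)" using fin by simp
    fix c x assume c: "(\<Sum>v\<in>w ` I. fscale (c v) v) = 0" and x: "x \<in> w ` I"
    have "(\<Sum>i\<in>I. fscale ((c \<circ> w) i) (w i)) = 0"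
      using c by (simp add: sum.reindex[OF inj])
    with x show "c x = 0" using indep by fastforce
  qed
  moreover have "w ` I \<subseteq> fvs.span B" using span by auto
  ultimately have "card (w ` I) \<le> card B" using fvs.independent_span_bound[OF fin(2)] by blast
  thus ?thesis using card_image[OF inj] by simp
qed

lemma fun_eq_sum_indicator:
  fixes f :: "'b \<Rightarrow> real"
  assumes "finite D" "\<And>x. x \<notin> D \<Longrightarrow> f x = 0"
  shows "f = (\<Sum>j\<in>D. fscale (f j) (indicator {j}))"
proof
  fix x
  have "(\<Sum>j\<in>D. fscale (f j) (indicator {j})) x = (\<Sum>j\<in>D. f j * indicator {j} x)"
    by (simp add: sum_apply fscale_def)
  also have "\<dots> = (\<Sum>j\<in>D. if x = j then f j else 0)"
    by (intro sum.cong) (auto split: split_indicator)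
  also have "\<dots> = f x" using assms by (cases "x \<in> D") (simp_all add: sum.delta)
  finally show "f x = (\<Sum>j\<in>D. fscale (f j) (indicator {j})) x" ..
qed

lemma in_span_indicators:
  fixes f :: "'b \<Rightarrow> real"
  assumes "finite D" "\<And>x. x \<notin> D \<Longrightarrow> f x = 0"
  shows "f \<in> fvs.span ((\<lambda>j. indicator {j}) ` D)"
proof -
  have "f = (\<Sum>j\<in>D. fscale (f j) (indicator {j}))" using assms by (rule fun_eq_sum_indicator)
  also have "\<dots> \<in> fvs.span ((\<lambda>j. indicator {j}) ` D)"
    by (intro fvs.span_sum fvs.span_scale fvs.span_base imageI)
  finally show ?thesis .
qed

lemma in_span_indicator_differences:
  fixes f :: "'b \<Rightarrow> real"
  assumes D: "finite D" "r \<in> D" and supp: "\<And>x. x \<notin> D \<Longrightarrow> f x = 0"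
    and sum0: "(\<Sum>x\<in>D. f x) = 0"
  shows "f \<in> fvs.span ((\<lambda>j. indicator {j} - indicator {r}) ` (D - {r}))"
proof -
  have base: "indicator {j} - indicator {r} \<in> fvs.span ((\<lambda>j. indicator {j} - indicator {r}) ` (D - {r}))"
    if "j \<in> D" for j
    using that by (cases "j = r") (auto intro: fvs.span_base fvs.span_zero)
  have "f = (\<Sum>j\<in>D. fscale (f j) (indicator {j} - indicator {r}))"
  proof
    fix x
    have "(\<Sum>j\<in>D. fscale (f j) (indicator {j} - indicator {r})) x
        = (\<Sum>j\<in>D. fscale (f j) (indicator {j})) x - (\<Sum>j\<in>D. f j) * indicator {r} x"
      by (simp add: sum_apply fscale_def algebra_simps sum_subtractf sum_distrib_right)
    moreover have "(\<Sum>j\<in>D. fscale (f j) (indicator {j})) x = f x"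
      using fun_eq_sum_indicator[of D f] D(1) supp by metis
    ultimately show "f x = (\<Sum>j\<in>D. fscale (f j) (indicator {j} - indicator {r})) x"
      using sum0 by simp
  qed
  also have "\<dots> \<in> fvs.span ((\<lambda>j. indicator {j} - indicator {r}) ` (D - {r}))"
    by (intro fvs.span_sum fvs.span_scale base)
  finally show ?thesis .
qed

lemma walk_singleton [simp]: "walk V E [x] \<longleftrightarrow> x \<in> V"
  by (simp add: walk_def)

lemma walk_Cons_Cons: "walk V E (x # y # ys) \<longleftrightarrow> x \<in> V \<and> {x, y} \<in> E \<and> walk V E (y # ys)"
proof -
  have split_nat: "(\<forall>i. Q i) \<longleftrightarrow> Q 0 \<and> (\<forall>i. Q (Suc i))" for Q :: "nat \<Rightarrow> bool"
    by (metis not0_implies_Suc)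
  show ?thesis unfolding walk_def by (subst split_nat) auto
qed

lemma walk_mono: "walk V E p \<Longrightarrow> V \<subseteq> V' \<Longrightarrow> E \<subseteq> E' \<Longrightarrow> walk V' E' p"
  by (auto simp: walk_def)

lemma walk_drop: "walk V E p \<Longrightarrow> k < length p \<Longrightarrow> walk V E (drop k p)"
  unfolding walk_def by (auto dest: in_set_dropD)

lemma walk_snoc:
  assumes p: "walk V E p" and w: "w \<in> V" "{last p, w} \<in> E"
  shows "walk V E (p @ [w])"
  unfolding walk_def
proof (intro conjI allI impI)
  fix i assume "Suc i < length (p @ [w])"
  then consider "Suc i < length p" | "i = length p - 1" by fastforce
  thus "{(p @ [w]) ! i, (p @ [w]) ! Suc i} \<in> E"
    using p w by cases (auto simp: walk_def nth_append last_conv_nth)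
qed (use p w in \<open>auto simp: walk_def\<close>)

lemma walk_last_in_closed:
  assumes "walk V E q" "hd q \<in> A" "\<And>x y. x \<in> A \<Longrightarrow> {x, y} \<in> E \<Longrightarrow> y \<in> A"
  shows "last q \<in> A"
  using assms
proof (induction q rule: induct_list012)
  case (3 x y zs)
  then show ?case by (auto simp: walk_Cons_Cons)
qed (auto simp: walk_def)

lemma distinct_walk_exists:
  assumes "walk V E p"
  shows "\<exists>p'. walk V E p' \<and> distinct p' \<and> hd p' = hd p \<and> last p' = last p"
  using assms
proof (induction p)
  case Nil thus ?case by (simp add: walk_def)
next
  case (Cons x xs)
  show ?case
  proof (cases xs)
    case Nil thus ?thesis using Cons.prems by (intro exI[of _ "[x]"]) simp
  next
    case (Cons y ys)
    with Cons.prems have x: "x \<in> V" "{x, y} \<in> E" and wxs: "walk V E xs"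
      by (simp_all add: walk_Cons_Cons)
    obtain p' where p': "walk V E p'" "distinct p'" "hd p' = y" "last p' = last xs"
      using Cons.IH[OF wxs] Cons by auto
    obtain z zs where pz: "p' = z # zs" using p'(1) by (cases p') (auto simp: walk_def)
    show ?thesis
    proof (cases "x \<in> set p'")
      case True
      then obtain k where k: "k < length p'" "p' ! k = x" by (auto simp: in_set_conv_nth)
      show ?thesis using walk_drop[OF p'(1) k(1)] p' k Cons
        by (intro exI[of _ "drop k p'"]) (auto simp: hd_drop_conv_nth)
    next
      case False
      have "walk V E (x # p')" using x p' pz by (simp add: walk_Cons_Cons)
      thus ?thesis using p' False pz Cons by (intro exI[of _ "x # p'"]) auto
    qed
  qed
qed

lemma connected_graph_edge_leaving:
  assumes "connected_graph V E" "x \<in> V" "y \<in> V" "x \<in> A" "y \<notin> A"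
  obtains a b where "a \<in> A" "b \<notin> A" "{a, b} \<in> E"
proof -
  obtain q where "walk V E q" "hd q = x" "last q = y"
    using assms(1-3) unfolding connected_graph_def by blast
  with assms(4,5) walk_last_in_closed[of V E q A] show thesis using that by blast
qed

lemma graph_edgeD: "graph V E \<Longrightarrow> {x, y} \<in> E \<Longrightarrow> x \<in> V \<and> y \<in> V \<and> x \<noteq> y"
  unfolding graph_def by (auto simp: doubleton_eq_iff)

lemma graph_edgeE:
  assumes "graph V E" "e \<in> E"
  obtains x y where "e = {x, y}" "x \<in> V" "y \<in> V" "x \<noteq> y"
  using assms unfolding graph_def by blast

lemma graph_finite_edges:
  assumes "graph V E" shows "finite E"
proof -
  have "E \<subseteq> (\<lambda>(u, v). {u, v}) ` (V \<times> V)" using assms unfolding graph_def by auto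
  moreover have "finite (V \<times> V)" using assms by (simp add: graph_def)
  ultimately show ?thesis by (meson finite_imageI finite_subset)
qed

lemma graph_induced:
  assumes g: "graph V E" and S: "S \<subseteq> V" "S \<noteq> {}"
  shows "graph S (induced_edges E S)"
proof -
  have "e \<in> {{u, v} | u v. u \<in> S \<and> v \<in> S \<and> u \<noteq> v}" if e: "e \<in> E" "e \<subseteq> S" for e
  proof -
    obtain x y where "e = {x, y}" "x \<noteq> y" using graph_edgeE[OF g e(1)] by blast
    with e(2) show ?thesis by blast
  qed
  moreover have "finite S" using g S(1) by (auto simp: graph_def intro: finite_subset)
  ultimately show ?thesis using S(2) unfolding graph_def induced_edges_def by blast
qed

lemma graph_complement: "graph V E \<Longrightarrow> graph V (complement_edges V E)"
  unfolding graph_def complement_edges_def by auto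

lemma induced_edges_induced_edges:
  "S \<subseteq> W \<Longrightarrow> induced_edges (induced_edges E W) S = induced_edges E S"
  by (auto simp: induced_edges_def)

lemma complement_edges_induced_edges:
  assumes "S \<subseteq> V"
  shows "complement_edges S (induced_edges E S) = induced_edges (complement_edges V E) S"
  using assms unfolding complement_edges_def induced_edges_def by blast

lemma complement_edges_disjoint: "e \<in> complement_edges V E \<Longrightarrow> e \<notin> E"
  by (auto simp: complement_edges_def)

section \<open>Orthogonal representations\<close>

lemma orth_rep_induced:
  "orth_rep V E d \<phi> \<Longrightarrow> S \<subseteq> V \<Longrightarrow> orth_rep S (induced_edges E S) d \<phi>"
  unfolding orth_rep_def induced_edges_def by (auto simp: subset_iff)

lemma mvr_le: "orth_rep V E d \<phi> \<Longrightarrow> mvr V E \<le> d"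
  unfolding mvr_def by (intro Least_le) blast

definition isolated_vertices :: "'a set \<Rightarrow> 'a set set \<Rightarrow> 'a set" where
  "isolated_vertices V E = {v \<in> V. \<forall>e\<in>E. v \<notin> e}"

text \<open>Coordinates are the edges and the singletons of isolated vertices; a vertex gets a \<open>1\<close>
  exactly in the coordinates containing it, so two vertices share a coordinate iff they are adjacent.\<close>

lemma orth_rep_incidence:
  assumes g: "graph V E"
  shows "\<exists>\<phi>. orth_rep V E (card E + card (isolated_vertices V E)) \<phi>"
proof -
  define J where "J = E \<union> (\<lambda>v. {v}) ` isolated_vertices V E"
  have fE: "finite E" using graph_finite_edges[OF g] .
  have fI: "finite (isolated_vertices V E)" using g by (simp add: graph_def isolated_vertices_def)
  have EV: "E \<subseteq> {{u, v} | u v. u \<in> V \<and> v \<in> V \<and> u \<noteq> v}" using g by (simp add: graph_def)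
  have "E \<inter> (\<lambda>v. {v}) ` isolated_vertices V E = {}" using EV by auto
  hence cJ: "card J = card E + card (isolated_vertices V E)"
    unfolding J_def using fE fI by (simp add: card_Un_disjoint card_image inj_on_def)
  have fJ: "finite J" using fE fI by (simp add: J_def)
  obtain h where h: "bij_betw h {0..<card J} J" using ex_bij_betw_nat_finite[OF fJ] by blast
  define \<phi> where "\<phi> v i = (if v \<in> h i then (1::real) else 0)" for v i
  have ip: "(\<Sum>i<card J. \<phi> u i * \<phi> v i) = (\<Sum>e\<in>J. if u \<in> e \<and> v \<in> e then 1 else 0)" for u v
  proof -
    have "(\<Sum>i<card J. \<phi> u i * \<phi> v i)
        = (\<Sum>i\<in>{0..<card J}. (\<lambda>e. if u \<in> e \<and> v \<in> e then (1::real) else 0) (h i))"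
      by (intro sum.cong) (auto simp: \<phi>_def atLeast0LessThan)
    also have "\<dots> = (\<Sum>e\<in>J. if u \<in> e \<and> v \<in> e then 1 else 0)"
      using sum.reindex_bij_betw[OF h] by simp
    finally show ?thesis .
  qed
  have "orth_rep V E (card J) \<phi>"
    unfolding orth_rep_def
  proof (intro conjI ballI impI)
    fix v assume v: "v \<in> V"
    obtain e where e: "e \<in> J" "v \<in> e"
      using v by (cases "v \<in> isolated_vertices V E") (auto simp: J_def isolated_vertices_def)
    then obtain i where "i < card J" "h i = e"
      using h unfolding bij_betw_def by (metis atLeastLessThan_iff imageE)
    thus "\<exists>i<card J. \<phi> v i \<noteq> 0" using e by (auto simp: \<phi>_def)
  next
    fix u v assume uv: "u \<in> V" "v \<in> V" "u \<noteq> v"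
    have "e = {u, v}" if "e \<in> J" "u \<in> e" "v \<in> e" for e
      using that EV uv by (auto simp: J_def)
    hence "(\<exists>e\<in>J. u \<in> e \<and> v \<in> e) \<longleftrightarrow> {u, v} \<in> E" using uv by (auto simp: J_def)
    moreover have "(\<Sum>i<card J. \<phi> u i * \<phi> v i) = 0 \<longleftrightarrow> \<not> (\<exists>e\<in>J. u \<in> e \<and> v \<in> e)"
      unfolding ip using fJ by (subst sum_nonneg_eq_0_iff) auto
    ultimately show "(\<Sum>i<card J. \<phi> u i * \<phi> v i) = 0 \<longleftrightarrow> {u, v} \<notin> E" by blast
  qed
  thus ?thesis using cJ by auto
qed

lemma orth_rep_mvr: "graph V E \<Longrightarrow> \<exists>\<phi>. orth_rep V E (mvr V E) \<phi>"
  unfolding mvr_def by (rule LeastI_ex) (use orth_rep_incidence in blast)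

lemma mvr_le_card_edges_isolated:
  "graph V E \<Longrightarrow> mvr V E \<le> card E + card (isolated_vertices V E)"
  using orth_rep_incidence mvr_le by blast

lemma mvr_edgeless_le_card: "graph V {} \<Longrightarrow> mvr V {} \<le> card V"
  using mvr_le_card_edges_isolated[of V "{}"] by (simp add: isolated_vertices_def)

lemma mvr_complete_le_1: "mvr V (complement_edges V {}) \<le> 1"
  by (rule mvr_le[of _ _ _ "\<lambda>_ _. 1"]) (auto simp: orth_rep_def complement_edges_def)

lemma mvr_induced_le: "graph V E \<Longrightarrow> S \<subseteq> V \<Longrightarrow> mvr S (induced_edges E S) \<le> mvr V E"
  using orth_rep_mvr orth_rep_induced mvr_le by blast

lemma orth_rep_dim_ge_2_if_non_edge:
  assumes rep: "orth_rep V E d \<phi>" and uv: "u \<in> V" "v \<in> V" "u \<noteq> v" "{u, v} \<notin> E"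
  shows "2 \<le> d"
proof (rule ccontr)
  assume "\<not> 2 \<le> d"
  hence d: "d = 0 \<or> d = 1" by auto
  have "\<exists>i<d. \<phi> u i \<noteq> 0" "\<exists>i<d. \<phi> v i \<noteq> 0" "(\<Sum>i<d. \<phi> u i * \<phi> v i) = 0"
    using rep uv by (auto simp: orth_rep_def)
  thus False using d by auto
qed

lemma mvr_ge_2_if_non_edge:
  "graph V E \<Longrightarrow> u \<in> V \<Longrightarrow> v \<in> V \<Longrightarrow> u \<noteq> v \<Longrightarrow> {u, v} \<notin> E \<Longrightarrow> 2 \<le> mvr V E"
  using orth_rep_mvr orth_rep_dim_ge_2_if_non_edge by metis

section \<open>Acyclic graphs\<close>

lemma finite_distinct_walks:
  assumes "finite V"
  shows "finite {p. distinct p \<and> walk V E p}"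
proof -
  have "length p \<le> card V" if "distinct p" "set p \<subseteq> V" for p :: "'a list"
    using that card_mono[OF assms] by (metis distinct_card)
  hence "{p. distinct p \<and> walk V E p} \<subseteq> {p. set p \<subseteq> V \<and> length p \<le> card V}"
    by (auto simp: walk_def)
  thus ?thesis using finite_lists_length_le[OF assms] finite_subset by blast
qed

text \<open>A longest path in the subgraph \<open>F\<close> ends in a vertex with a second \<open>F\<close>-edge; maximality
  forces that edge back onto the path, closing a cycle.\<close>

lemma cycle_if_no_leaf:
  assumes g: "graph V E" and F: "F \<subseteq> E" "F \<noteq> {}"
    and no_leaf: "\<And>e x. e \<in> F \<Longrightarrow> x \<in> e \<Longrightarrow> \<exists>e'\<in>F. e' \<noteq> e \<and> x \<in> e'"
  shows "\<exists>c. is_cycle V E c"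
proof -
  define P where "P = {p. distinct p \<and> walk V F p \<and> 2 \<le> length p}"
  have fP: "finite P" unfolding P_def
    by (rule finite_subset[OF _ finite_distinct_walks[of V F]]) (use g in \<open>auto simp: graph_def\<close>)
  obtain a b where ab: "{a, b} \<in> F" "a \<noteq> b" using F by (metis graph_edgeE[OF g] subsetD ex_in_conv)
  hence "[a, b] \<in> P" using F(1) graph_edgeD[OF g] by (auto simp: P_def walk_Cons_Cons)
  hence "Max (length ` P) \<in> length ` P" using fP by (intro Max_in) auto
  then obtain p where p: "p \<in> P" "length p = Max (length ` P)" by auto
  have longest: "length q \<le> length p" if "q \<in> P" for q using fP that p(2) by simp
  define k where "k = length p"
  have k2: "2 \<le> k" and dp: "distinct p" and wp: "walk V F p" using p(1) by (auto simp: P_def k_def)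
  define x where "x = p ! (k - 1)"
  define y where "y = p ! (k - 2)"
  have lastp: "last p = x" by (subst last_conv_nth) (use k2 in \<open>auto simp: x_def k_def\<close>)
  have "{p ! (k - 2), p ! Suc (k - 2)} \<in> F" using wp k2 unfolding walk_def k_def by simp
  hence yx: "{y, x} \<in> F" using k2 by (simp add: x_def y_def Suc_diff_Suc numeral_2_eq_2)
  obtain e where e: "e \<in> F" "e \<noteq> {y, x}" "x \<in> e" using no_leaf[OF yx] by blast
  obtain a b where "e = {a, b}" using graph_edgeE[OF g] F(1) e(1) by blast
  with e(3) obtain z where "e = {x, z}" by blast
  with e have e': "{x, z} \<in> F" "{x, z} \<noteq> {y, x}" by simp_all
  have zV: "z \<in> V" "z \<noteq> x" using graph_edgeD[OF g] F(1) e'(1) by blast+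
  have zy: "z \<noteq> y" using e'(2) by (auto simp: insert_commute)
  show ?thesis
  proof (cases "z \<in> set p")
    case False
    have "walk V F (p @ [z])" using walk_snoc[OF wp zV(1)] lastp e' by simp
    hence "p @ [z] \<in> P" using False dp k2 by (simp add: P_def k_def)
    with longest show ?thesis by fastforce
  next
    case True
    then obtain j where j: "j < k" "p ! j = z" unfolding in_set_conv_nth k_def by blast
    have "j \<noteq> k - 1" "j \<noteq> k - 2" using j zV zy by (auto simp: x_def y_def)
    hence "j + 3 \<le> k" using j k2 by linarith
    moreover have "walk V E (drop j p)"
      using walk_mono[OF walk_drop[OF wp, of j] _ F(1)] j by (simp add: k_def)
    moreover have "hd (drop j p) = z" "last (drop j p) = x"
      using j lastp by (simp_all add: k_def hd_drop_conv_nth)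
    ultimately have "is_cycle V E (drop j p)"
      using dp e' F(1) by (auto simp: is_cycle_def k_def)
    thus ?thesis by blast
  qed
qed

text \<open>The signed incidence vectors of the edges have coordinate sum zero, so they lie in a space
  of dimension \<open>|V| - 1\<close>; a vanishing combination of them is supported on a subgraph without
  leaves, which would contain a cycle.\<close>

lemma acyclic_card_edges_le:
  assumes g: "graph V E" and acyclic: "\<nexists>c. is_cycle V E c"
  shows "card E \<le> card V - 1"
proof -
  have fV: "finite V" and fE: "finite E" using g graph_finite_edges by (auto simp: graph_def)
  obtain r where r: "r \<in> V" using g by (auto simp: graph_def)
  define s where "s e = (SOME x. x \<in> e)" for e :: "'a set"
  define w where "w e x = (if x \<in> e then if x = s e then 1 else -1 else (0::real))" for e x
  have w0: "w e x = 0 \<longleftrightarrow> x \<notin> e" for e x by (simp add: w_def)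
  define B where "B = (\<lambda>j. indicator {j} - indicator {r} :: 'a \<Rightarrow> real) ` (V - {r})"
  have "card E \<le> card B"
  proof (rule card_le_card_if_independent_in_span)
    show "finite E" "finite B" using fE fV by (simp_all add: B_def)
  next
    fix e assume e: "e \<in> E"
    then obtain a b where ab: "e = {a, b}" "a \<in> V" "b \<in> V" "a \<noteq> b" by (rule graph_edgeE[OF g])
    have "s e \<in> e" unfolding s_def using ab by (metis insertI1 someI)
    hence "(\<Sum>x\<in>{a, b}. w e x) = 0" using ab by (auto simp: w_def)
    moreover have "(\<Sum>x\<in>V. w e x) = (\<Sum>x\<in>{a, b}. w e x)"
      using ab fV by (intro sum.mono_neutral_right) (auto simp: w_def)
    ultimately show "w e \<in> fvs.span B"
      unfolding B_def using ab by (intro in_span_indicator_differences[OF fV r]) (auto simp: w_def)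
  next
    fix c assume dep: "(\<Sum>e\<in>E. fscale (c e) (w e)) = 0"
    define F where "F = {e \<in> E. c e \<noteq> 0}"
    have no_leaf: "\<exists>e'\<in>F. e' \<noteq> e \<and> x \<in> e'" if eF: "e \<in> F" and xe: "x \<in> e" for e x
    proof (rule ccontr)
      assume "\<not> (\<exists>e'\<in>F. e' \<noteq> e \<and> x \<in> e')"
      hence "(\<Sum>e'\<in>E - {e}. c e' * w e' x) = 0" using w0 by (intro sum.neutral) (auto simp: F_def)
      hence "(\<Sum>e'\<in>E. c e' * w e' x) = c e * w e x"
        using sum.remove[OF fE, of e "\<lambda>e'. c e' * w e' x"] eF by (simp add: F_def)
      moreover have "(\<Sum>e'\<in>E. c e' * w e' x) = 0"
        using fun_cong[OF dep, of x] by (simp add: sum_apply fscale_def)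
      ultimately show False using eF xe w0 by (auto simp: F_def)
    qed
    have "F \<subseteq> E" by (auto simp: F_def)
    with cycle_if_no_leaf[OF g _ _ no_leaf] acyclic have "F = {}" by blast
    thus "\<forall>e\<in>E. c e = 0" by (auto simp: F_def)
  qed
  also have "card B \<le> card (V - {r})" unfolding B_def using fV by (intro card_image_le) simp
  also have "\<dots> = card V - 1" using fV r by simp
  finally show ?thesis .
qed

section \<open>Trees\<close>

lemma tree_branch:
  assumes tree: "is_tree V E" and zp: "{z, p} \<in> E"
  obtains C where "p \<in> C" "C \<subseteq> V - {z}"
    and "\<And>u w. u \<in> C \<Longrightarrow> w \<in> V - {z} - C \<Longrightarrow> {u, w} \<notin> E"
    and "\<And>u. u \<in> C \<Longrightarrow> {z, u} \<in> E \<Longrightarrow> u = p"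
proof -
  have g: "graph V E" and acyclic: "\<nexists>c. is_cycle V E c" using tree by (auto simp: is_tree_def)
  have zpV: "z \<in> V" "p \<in> V" "z \<noteq> p" using graph_edgeD[OF g zp] by auto
  define W where "W = V - {z}"
  define C where "C = {u. \<exists>q. walk W E q \<and> hd q = p \<and> last q = u}"
  have CW: "C \<subseteq> W" unfolding C_def walk_def by (auto simp: last_in_set)
  have "p \<in> C" unfolding C_def using zpV by (intro CollectI exI[of _ "[p]"]) (auto simp: W_def)
  moreover have "{u, w} \<notin> E" if u: "u \<in> C" and w: "w \<in> W - C" for u w
  proof
    assume e: "{u, w} \<in> E"
    obtain q where q: "walk W E q" "hd q = p" "last q = u" using u unfolding C_def by blast
    have "walk W E (q @ [w])" using walk_snoc[OF q(1)] q(3) e w by simp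
    moreover have "q \<noteq> []" using q(1) by (simp add: walk_def)
    ultimately have "w \<in> C" unfolding C_def using q(2) by (intro CollectI exI[of _ "q @ [w]"]) auto
    thus False using w by simp
  qed
  moreover have "v = p" if v: "v \<in> C" and zv: "{z, v} \<in> E" for v
  proof (rule ccontr)
    assume vp: "v \<noteq> p"
    obtain q where "walk W E q" "hd q = p" "last q = v" using v unfolding C_def by blast
    then obtain q' where q': "walk W E q'" "distinct q'" "hd q' = p" "last q' = v"
      using distinct_walk_exists by metis
    obtain rest where rest: "q' = p # rest" using q'(1,3) by (cases q') (auto simp: walk_def)
    have "rest \<noteq> []" using rest q'(4) vp by auto
    hence "3 \<le> length (z # q')" using rest by (cases rest) auto
    moreover have "z \<notin> set q'" using q'(1) by (auto simp: walk_def W_def)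
    moreover have "walk V E (z # q')"
      using walk_mono[OF q'(1)] rest zpV zp by (simp add: W_def walk_Cons_Cons)
    moreover have "{last (z # q'), hd (z # q')} \<in> E" using q'(4) rest zv by (simp add: insert_commute)
    ultimately have "is_cycle V E (z # q')" using q'(2) by (simp add: is_cycle_def)
    thus False using acyclic by blast
  qed
  ultimately show thesis using that CW by (simp add: W_def)
qed

lemma tree_orth_rep_dependency_trivial:
  assumes tree: "is_tree V E" and rep: "orth_rep V E d \<phi>"
    and z0: "z0 \<in> V" "c z0 = 0"
    and dep: "\<And>i. i < d \<Longrightarrow> (\<Sum>v\<in>V. c v * \<phi> v i) = 0"
  shows "\<forall>v\<in>V. c v = 0"
proof (rule ccontr)
  assume "\<not> (\<forall>v\<in>V. c v = 0)"
  then obtain p0 where "p0 \<in> V" "c p0 \<noteq> 0" by blast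
  then obtain z p where zp: "c z = 0" "c p \<noteq> 0" "{z, p} \<in> E"
    using connected_graph_edge_leaving[of V E z0 p0 "{x. c x = 0}"] tree z0
    by (auto simp: is_tree_def)
  have g: "graph V E" using tree by (simp add: is_tree_def)
  have fV: "finite V" using g by (simp add: graph_def)
  have zpV: "z \<in> V" "p \<in> V" "z \<noteq> p" using graph_edgeD[OF g zp(3)] by auto
  obtain C where C: "p \<in> C" "C \<subseteq> V - {z}"
    and cut: "\<And>u w. u \<in> C \<Longrightarrow> w \<in> V - {z} - C \<Longrightarrow> {u, w} \<notin> E"
    and branch: "\<And>u. u \<in> C \<Longrightarrow> {z, u} \<in> E \<Longrightarrow> u = p"
    using tree_branch[OF tree zp(3)] by blast
  define R where "R = V - {z} - C"
  define ip where "ip x y = (\<Sum>i<d. \<phi> x i * \<phi> y i)" for x y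
  have ip0: "ip u w = 0 \<longleftrightarrow> {u, w} \<notin> E" if "u \<in> V" "w \<in> V" "u \<noteq> w" for u w
    using rep that unfolding orth_rep_def ip_def by blast
  define X where "X i = (\<Sum>v\<in>C. c v * \<phi> v i)" for i
  define Y where "Y i = (\<Sum>v\<in>R. c v * \<phi> v i)" for i
  have fC: "finite C" and fR: "finite R" using C(2) fV by (auto simp: R_def intro: finite_subset)
  have Y: "Y i = - X i" if "i < d" for i
  proof -
    have "V = insert z (C \<union> R)" "z \<notin> C \<union> R" "C \<inter> R = {}" using C zpV by (auto simp: R_def)
    hence "(\<Sum>v\<in>V. c v * \<phi> v i) = c z * \<phi> z i + (X i + Y i)"
      using fC fR by (simp add: X_def Y_def sum.union_disjoint)
    thus ?thesis using dep[OF that] zp(1) by simp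
  qed
  have "(\<Sum>i<d. X i * Y i) = (\<Sum>i<d. \<Sum>u\<in>C. \<Sum>w\<in>R. c u * \<phi> u i * (c w * \<phi> w i))"
    by (simp add: X_def Y_def sum_product)
  also have "\<dots> = (\<Sum>u\<in>C. \<Sum>w\<in>R. \<Sum>i<d. c u * \<phi> u i * (c w * \<phi> w i))"
    by (subst sum.swap) (simp add: sum.swap[of _ "{..<d}"])
  also have "\<dots> = (\<Sum>u\<in>C. \<Sum>w\<in>R. c u * c w * ip u w)"
    by (simp add: ip_def sum_distrib_left mult_ac)
  also have "\<dots> = 0"
  proof -
    have "ip u w = 0" if "u \<in> C" "w \<in> R" for u w
      using that C(2) cut[of u w] ip0[of u w] by (auto simp: R_def)
    thus ?thesis by simp
  qed
  finally have "(\<Sum>i<d. X i * X i) = 0" using Y by (simp add: sum_negf)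
  hence X0: "X i = 0" if "i < d" for i
    using that by (subst (asm) sum_nonneg_eq_0_iff) auto
  have "(\<Sum>i<d. \<phi> z i * X i) = (\<Sum>v\<in>C. c v * ip z v)"
    unfolding X_def ip_def sum_distrib_left by (subst sum.swap) (simp add: mult_ac)
  also have "\<dots> = c p * ip z p + (\<Sum>v\<in>C - {p}. c v * ip z v)"
    using sum.remove[OF fC C(1)] by simp
  also have "(\<Sum>v\<in>C - {p}. c v * ip z v) = 0"
    using C branch ip0 zpV by (intro sum.neutral ballI) auto
  finally have "c p * ip z p = 0" using X0 by simp
  moreover have "ip z p \<noteq> 0" using ip0 zpV zp(3) by blast
  ultimately show False using zp(2) by simp
qed

lemma tree_card_le_orth_rep_dim:
  assumes tree: "is_tree V E" and rep: "orth_rep V E d \<phi>"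
  shows "card V - 1 \<le> d"
proof -
  have fV: "finite V" and "V \<noteq> {}" using tree by (auto simp: is_tree_def graph_def)
  then obtain r where r: "r \<in> V" by blast
  define w where "w v = (\<lambda>i::nat. if i < d then \<phi> v i else 0)" for v
  define B where "B = (\<lambda>j. indicator {j} :: nat \<Rightarrow> real) ` {..<d}"
  have "card (V - {r}) \<le> card B"
  proof (rule card_le_card_if_independent_in_span)
    show "finite (V - {r})" "finite B" using fV by (simp_all add: B_def)
    show "w v \<in> fvs.span B" for v
      unfolding B_def by (rule in_span_indicators) (auto simp: w_def)
  next
    fix c assume dep: "(\<Sum>v\<in>V - {r}. fscale (c v) (w v)) = 0"
    have "(\<Sum>v\<in>V - {r}. c v * \<phi> v i) = 0" if "i < d" for i
      using fun_cong[OF dep, of i] that by (simp add: sum_apply fscale_def w_def)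
    hence "(\<Sum>v\<in>V. (c(r := 0)) v * \<phi> v i) = 0" if "i < d" for i
      using that sum.remove[OF fV r, of "\<lambda>v. (c(r := 0)) v * \<phi> v i"] by simp
    hence "\<forall>v\<in>V. (c(r := 0)) v = 0"
      by (intro tree_orth_rep_dependency_trivial[OF tree rep r]) simp_all
    thus "\<forall>v\<in>V - {r}. c v = 0" by (metis DiffE fun_upd_other singletonI)
  qed
  also have "card B \<le> d" unfolding B_def using card_image_le[of "{..<d}"] by simp
  finally show ?thesis using fV r by simp
qed

lemma tree_card_le_mvr: "is_tree V E \<Longrightarrow> card V - 1 \<le> mvr V E"
  using orth_rep_mvr tree_card_le_orth_rep_dim unfolding is_tree_def by blast

lemma tree_card_edges_le_mvr: "is_tree V E \<Longrightarrow> card E \<le> mvr V E"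
  using acyclic_card_edges_le tree_card_le_mvr unfolding is_tree_def by fastforce

section \<open>Deleting a vertex from a connected graph\<close>

lemma connected_isolated_after_deletion_adjacent:
  assumes g: "graph V E" and con: "connected_graph V E" and v: "v \<in> V"
    and u: "u \<in> isolated_vertices (V - {v}) (induced_edges E (V - {v}))"
  shows "{v, u} \<in> E"
proof -
  have uV: "u \<in> V" "u \<noteq> v" using u by (auto simp: isolated_vertices_def)
  obtain b where ub: "b \<noteq> u" "{u, b} \<in> E"
    using connected_graph_edge_leaving[OF con uV(1) v, of "{u}"] uV by auto
  have "b = v"
    using u ub graph_edgeD[OF g ub(2)] by (auto simp: isolated_vertices_def induced_edges_def)
  thus ?thesis using ub by (simp add: insert_commute)
qed

lemma connected_star_if_neighbours_isolated:
  assumes g: "graph V E" and con: "connected_graph V E" and v: "v \<in> V"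
    and iso: "\<And>u. {v, u} \<in> E \<Longrightarrow> u \<in> isolated_vertices (V - {v}) (induced_edges E (V - {v}))"
  shows "E = {{v, u} | u. u \<in> V \<and> u \<noteq> v}"
proof -
  have no_edge: "{a, b} \<notin> E" if "{v, a} \<in> E" "b \<in> V" "b \<noteq> v" for a b
    using iso[OF that(1)] that(2,3) by (auto simp: isolated_vertices_def induced_edges_def)
  have adj: "{v, u} \<in> E" if u: "u \<in> V" "u \<noteq> v" for u
  proof (rule ccontr)
    assume "{v, u} \<notin> E"
    then obtain a b where ab: "a \<in> insert v {x. {v, x} \<in> E}" "b \<notin> insert v {x. {v, x} \<in> E}"
      "{a, b} \<in> E"
      using connected_graph_edge_leaving[OF con v u(1), of "insert v {x. {v, x} \<in> E}"] u by auto
    have "b \<in> V" using graph_edgeD[OF g ab(3)] by blast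
    thus False using ab no_edge by auto
  qed
  have "v \<in> e" if e: "e \<in> E" for e
  proof -
    obtain a b where ab: "e = {a, b}" "a \<in> V" "b \<in> V" "a \<noteq> b" using graph_edgeE[OF g e] .
    show ?thesis
    proof (rule ccontr)
      assume "v \<notin> e"
      hence "{v, a} \<in> E" "b \<noteq> v" using adj ab by auto
      thus False using no_edge ab e by blast
    qed
  qed
  thus ?thesis using adj graph_edgeE[OF g] by (auto simp: insert_commute) blast
qed

lemma connected_delete_vertex_card_less:
  assumes g: "graph V E" and con: "connected_graph V E" and v: "v \<in> V"
    and not_star: "E \<noteq> {{v, u} | u. u \<in> V \<and> u \<noteq> v}"
  shows "card (induced_edges E (V - {v}))
    + card (isolated_vertices (V - {v}) (induced_edges E (V - {v}))) < card E"
proof -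
  define I where "I = isolated_vertices (V - {v}) (induced_edges E (V - {v}))"
  define N where "N = {u. {v, u} \<in> E}"
  define Ev where "Ev = {e \<in> E. v \<in> e}"
  have fE: "finite E" using graph_finite_edges[OF g] .
  have fN: "finite N" using g graph_edgeD[OF g] unfolding N_def graph_def
    by (metis (no_types, lifting) mem_Collect_eq rev_finite_subset subsetI)
  have "induced_edges E (V - {v}) = E - Ev"
    using g unfolding graph_def induced_edges_def Ev_def by blast
  hence cardE: "card E = card (induced_edges E (V - {v})) + card Ev"
    using fE card_mono[OF fE, of Ev] card_Diff_subset[of Ev E] by (auto simp: Ev_def)
  have "I \<subseteq> N" using connected_isolated_after_deletion_adjacent[OF g con v] by (auto simp: I_def N_def)
  moreover have "I \<noteq> N" using connected_star_if_neighbours_isolated[OF g con v] not_star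
    by (auto simp: I_def N_def)
  ultimately have "card I < card N" using fN by (simp add: psubset_card_mono)
  also have "card N = card ((\<lambda>u. {v, u}) ` N)"
    by (rule card_image[symmetric]) (auto simp: inj_on_def N_def doubleton_eq_iff dest: graph_edgeD[OF g])
  also have "\<dots> \<le> card Ev" using fE by (intro card_mono) (auto simp: Ev_def N_def)
  finally show ?thesis using cardE by (simp add: I_def)
qed

lemma tree_induced_mvr_less:
  assumes tree: "is_tree V E" and v: "v \<in> V" and S: "S \<subseteq> V - {v}" "S \<noteq> {}"
    and not_star: "E \<noteq> {{v, u} | u. u \<in> V \<and> u \<noteq> v}"
  shows "mvr S (induced_edges E S) < mvr V E"
proof -
  let ?W = "V - {v}"
  let ?E' = "induced_edges E ?W"
  have g: "graph V E" and con: "connected_graph V E" using tree by (auto simp: is_tree_def)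
  have gW: "graph ?W ?E'" using graph_induced[OF g] S by blast
  have "mvr S (induced_edges E S) \<le> mvr ?W ?E'"
    using mvr_induced_le[OF gW S(1)] induced_edges_induced_edges[OF S(1)] by simp
  also have "\<dots> \<le> card ?E' + card (isolated_vertices ?W ?E')"
    using mvr_le_card_edges_isolated[OF gW] .
  also have "\<dots> < card E" using connected_delete_vertex_card_less[OF g con v not_star] .
  also have "\<dots> \<le> mvr V E" using tree_card_edges_le_mvr[OF tree] .
  finally show ?thesis .
qed

lemma tree_vector_critical:
  assumes tree: "is_tree V E" and not_star: "\<not> is_star V E"
  shows "vector_critical V E"
  unfolding vector_critical_def
proof (intro allI impI, elim conjE)
  fix S assume S: "S \<subset> V" "S \<noteq> {}"
  then obtain v where v: "v \<in> V" "S \<subseteq> V - {v}" by blast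
  have "E \<noteq> {{v, u} | u. u \<in> V \<and> u \<noteq> v}"
    using tree not_star v(1) by (auto simp: is_star_def is_tree_def)
  thus "mvr S (induced_edges E S) < mvr V E" using tree_induced_mvr_less[OF tree v S(2)] by blast
qed

lemma tree_complement_critical:
  assumes tree: "is_tree V E"
  shows "complement_critical V E"
  unfolding complement_critical_def
proof (intro allI impI, elim conjE)
  fix S assume S: "S \<subset> V" "S \<noteq> {}"
  then obtain v where v: "v \<in> V" "S \<subseteq> V - {v}" by blast
  have g: "graph V E" using tree by (simp add: is_tree_def)
  have SV: "S \<subseteq> V" using S by blast
  have comp: "mvr S (complement_edges S (induced_edges E S)) \<le> mvr V (complement_edges V E)"
    unfolding complement_edges_induced_edges[OF SV] by (rule mvr_induced_le[OF graph_complement[OF g] SV])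
  show "mvr S (induced_edges E S) + mvr S (complement_edges S (induced_edges E S))
      < mvr V E + mvr V (complement_edges V E)"
  proof (cases "E = {{v, u} | u. u \<in> V \<and> u \<noteq> v}")
    case False
    thus ?thesis using tree_induced_mvr_less[OF tree v S(2)] comp by simp
  next
    case star: True
    obtain w where w: "w \<in> S" using S by blast
    have empty: "induced_edges E S = {}" using star v(2) by (auto simp: induced_edges_def)
    have "graph S {}" using graph_induced[OF g SV S(2)] empty by simp
    hence "mvr S (induced_edges E S) \<le> card S" using empty mvr_edgeless_le_card by simp
    also have "\<dots> < card V" using S(1) g by (simp add: graph_def psubset_card_mono)
    also have "\<dots> \<le> mvr V E + 1" using tree_card_le_mvr[OF tree] by simp
    finally have "mvr S (induced_edges E S) \<le> mvr V E" by simp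
    moreover have "mvr S (complement_edges S (induced_edges E S)) \<le> 1"
      using empty mvr_complete_le_1 by simp
    moreover have "{v, w} \<in> E" using star w v by blast
    hence "2 \<le> mvr V (complement_edges V E)"
      using mvr_ge_2_if_non_edge[OF graph_complement[OF g]] complement_edges_disjoint v w by blast
    ultimately show ?thesis by linarith
  qed
qed

theorem proposition5p2:
  fixes V :: "'a set" and E :: "'a set set"
  assumes "is_tree V E"
  shows "complement_critical V E \<and> (\<not> is_star V E \<longrightarrow> vector_critical V E)"
  using tree_complement_critical tree_vector_critical assms by blast

end
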